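(* Let $\Delta$ be a finite saturated sample set, $\delta$ a $\Delta$-diagram, and $t_1,t_2$ basic terms. If the time warps $f_1$ and $f_2$ strongly extend $D_{t_1}(\delta)$ and $D_{t_2}(\delta)$, respectively, then $f_1\circ f_2$ strongly extends $D_{t_1t_2}(\delta)$.
   Context: Time warps: join-preserving maps $f\colon\omega^+\to\omega^+$, $\omega^+=\omega\cup\{\omega\}$; $\mathrm{last}(f)=\min\{m\in\omega^+\mid f(m)=f(\omega)\}$. Basic terms are built from variables using $\cdot,{}',1$. Samples (formal expressions): $\alpha::=\kappa\mid t[\alpha]\mid \mathrm{suc}(\alpha)\mid\mathrm{last}(t)$ with $\kappa$ a time variable and $t$ a basic term. The relation $\leadsto$: $t[\alpha]\leadsto\alpha$, $\mathrm{suc}(\alpha)\leadsto\alpha$, $t[\alpha]\leadsto t[\mathrm{last}(t)]$, $(tu)[\alpha]\leadsto t[u[\alpha]]$, $t'[\alpha]\leadsto t[t'[\alpha]]$, $t'[\alpha]\leadsto t[\mathrm{suc}(t'[\alpha])]$; a sample set is saturated if closed under $\leadsto$. $S(n)=n+1$ for $n\in\omega$, $S(\omega)=\omega$. For saturated $\Delta$, a $\Delta$-diagram is $\delta\colon\Delta\to\omega^+$ such that, whenever the samples mentioned belong to $\Delta$: (1) $\delta(\alpha)\le\delta(\beta)\Rightarrow\delta(t[\alpha])\le\delta(t[\beta])$; (2) $\delta(\alpha)=0\Rightarrow\delta(t[\alpha])=0$; (3) $\delta(\mathrm{suc}(\alpha))=S(\delta(\alpha))$; (4) for $t[\alpha]\in\Delta$: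 $\delta(\mathrm{last}(t))\le\delta(\alpha)\iff\delta(t[\mathrm{last}(t)])=\delta(t[\alpha])$; (5) $\delta(\mathrm{last}(t))=\omega\Rightarrow\delta(t[\mathrm{last}(t)])=\omega$; (6) $\delta(1[\alpha])=\delta(\alpha)$; (7) $\delta(\mathrm{last}(1))=\omega$; (8) $\delta((tu)[\alpha])=\delta(t[u[\alpha]])$; (9) $\delta(\mathrm{last}(tu))=\omega\Rightarrow\delta(\mathrm{last}(t))=\delta(\mathrm{last}(u))=\omega$; (10) for $t'[\alpha]\in\Delta$: $0<\delta(\alpha)<\omega\Rightarrow\delta(t[t'[\alpha]])<\delta(\alpha)$; (11) for $t'[\alpha]\in\Delta$: $\delta(t'[\alpha])<\omega\Rightarrow\delta(\alpha)\le\delta(t[\mathrm{suc}(t'[\alpha])])$; (12) $\delta(\mathrm{last}(t'))=\omega\Rightarrow\delta(\mathrm{last}(t))=\omega$. For a basic term $t$, $D_t(\delta)=\{(\delta(\alpha),\delta(t[\alpha]))\mid t[\alpha]\in\Delta\}$. A time warp $f$ extends $D_t(\delta)$ if $f(i)=j$ for all $(i,j)\in D_t(\delta)$, and strongly extends it if moreover $D_t(\delta)\neq\emptyset$ and $\delta(\mathrm{last}(t))=\omega$ together imply $\mathrm{last}(f)=\omega$. *)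

theory Defs
  imports "HOL-Library.Extended_Nat"
begin

text \<open>omega^+ is modelled by enat, with omega = \<infinity>.
  A time warp is a map omega^+ \<Rightarrow> omega^+ preserving all joins (suprema), including the empty join.\<close>

definition time_warp :: "(enat \<Rightarrow> enat) \<Rightarrow> bool" where
  "time_warp f \<longleftrightarrow> (\<forall>S. f (Sup S) = Sup (f ` S))"

definition last_tw :: "(enat \<Rightarrow> enat) \<Rightarrow> enat" where
  "last_tw f = (LEAST m. f m = f \<infinity>)"

datatype bterm = BVar nat | Comp bterm bterm | Prime bterm | One

datatype sample = TVar nat | App bterm sample | SucS sample | LastS bterm

inductive leadsto :: "sample \<Rightarrow> sample \<Rightarrow> bool" where
  "leadsto (App t a) a"
| "leadsto (SucS a) a"
| "leadsto (App t a) (App t (LastS t))"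
| "leadsto (App (Comp t u) a) (App t (App u a))"
| "leadsto (App (Prime t) a) (App t (App (Prime t) a))"
| "leadsto (App (Prime t) a) (App t (SucS (App (Prime t) a)))"

definition saturated :: "sample set \<Rightarrow> bool" where
  "saturated \<Delta> \<longleftrightarrow> (\<forall>a b. a \<in> \<Delta> \<longrightarrow> leadsto a b \<longrightarrow> b \<in> \<Delta>)"

definition diagram :: "sample set \<Rightarrow> (sample \<Rightarrow> enat) \<Rightarrow> bool" where
  "diagram \<Delta> \<delta> \<longleftrightarrow>
    (\<forall>t a b. a \<in> \<Delta> \<longrightarrow> b \<in> \<Delta> \<longrightarrow> App t a \<in> \<Delta> \<longrightarrow> App t b \<in> \<Delta> \<longrightarrow>
        \<delta> a \<le> \<delta> b \<longrightarrow> \<delta> (App t a) \<le> \<delta> (App t b))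
  \<and> (\<forall>t a. a \<in> \<Delta> \<longrightarrow> App t a \<in> \<Delta> \<longrightarrow> \<delta> a = 0 \<longrightarrow> \<delta> (App t a) = 0)
  \<and> (\<forall>a. a \<in> \<Delta> \<longrightarrow> SucS a \<in> \<Delta> \<longrightarrow> \<delta> (SucS a) = eSuc (\<delta> a))
  \<and> (\<forall>t a. App t a \<in> \<Delta> \<longrightarrow> a \<in> \<Delta> \<longrightarrow> LastS t \<in> \<Delta> \<longrightarrow> App t (LastS t) \<in> \<Delta> \<longrightarrow>
        (\<delta> (LastS t) \<le> \<delta> a \<longleftrightarrow> \<delta> (App t (LastS t)) = \<delta> (App t a)))
  \<and> (\<forall>t. LastS t \<in> \<Delta> \<longrightarrow> App t (LastS t) \<in> \<Delta> \<longrightarrow>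
        \<delta> (LastS t) = \<infinity> \<longrightarrow> \<delta> (App t (LastS t)) = \<infinity>)
  \<and> (\<forall>a. a \<in> \<Delta> \<longrightarrow> App One a \<in> \<Delta> \<longrightarrow> \<delta> (App One a) = \<delta> a)
  \<and> (LastS One \<in> \<Delta> \<longrightarrow> \<delta> (LastS One) = \<infinity>)
  \<and> (\<forall>t u a. App (Comp t u) a \<in> \<Delta> \<longrightarrow> App t (App u a) \<in> \<Delta> \<longrightarrow>
        \<delta> (App (Comp t u) a) = \<delta> (App t (App u a)))
  \<and> (\<forall>t u. LastS (Comp t u) \<in> \<Delta> \<longrightarrow> LastS t \<in> \<Delta> \<longrightarrow> LastS u \<in> \<Delta> \<longrightarrow>
        \<delta> (LastS (Comp t u)) = \<infinity> \<longrightarrow> \<delta> (LastS t) = \<infinity> \<and> \<delta> (LastS u) = \<infinity>)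
  \<and> (\<forall>t a. App (Prime t) a \<in> \<Delta> \<longrightarrow> a \<in> \<Delta> \<longrightarrow> App t (App (Prime t) a) \<in> \<Delta> \<longrightarrow>
        0 < \<delta> a \<longrightarrow> \<delta> a < \<infinity> \<longrightarrow> \<delta> (App t (App (Prime t) a)) < \<delta> a)
  \<and> (\<forall>t a. App (Prime t) a \<in> \<Delta> \<longrightarrow> a \<in> \<Delta> \<longrightarrow> App t (SucS (App (Prime t) a)) \<in> \<Delta> \<longrightarrow>
        \<delta> (App (Prime t) a) < \<infinity> \<longrightarrow> \<delta> a \<le> \<delta> (App t (SucS (App (Prime t) a))))
  \<and> (\<forall>t. LastS (Prime t) \<in> \<Delta> \<longrightarrow> LastS t \<in> \<Delta> \<longrightarrow>
        \<delta> (LastS (Prime t)) = \<infinity> \<longrightarrow> \<delta> (LastS t) = \<infinity>)"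

definition D_of :: "sample set \<Rightarrow> (sample \<Rightarrow> enat) \<Rightarrow> bterm \<Rightarrow> (enat \<times> enat) set" where
  "D_of \<Delta> \<delta> t = {(\<delta> a, \<delta> (App t a)) | a. App t a \<in> \<Delta>}"

definition extends_D :: "(enat \<Rightarrow> enat) \<Rightarrow> (enat \<times> enat) set \<Rightarrow> bool" where
  "extends_D f D \<longleftrightarrow> time_warp f \<and> (\<forall>(i, j) \<in> D. f i = j)"

definition strongly_extends :: "sample set \<Rightarrow> (sample \<Rightarrow> enat) \<Rightarrow> bterm \<Rightarrow> (enat \<Rightarrow> enat) \<Rightarrow> bool" where
  "strongly_extends \<Delta> \<delta> t f \<longleftrightarrow> extends_D f (D_of \<Delta> \<delta> t) \<and>
     (D_of \<Delta> \<delta> t \<noteq> {} \<and> \<delta> (LastS t) = \<infinity> \<longrightarrow> last_tw f = \<infinity>)"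

end

theory Submission
  imports Defs
begin

text \<open>Saturation puts \<open>t\<^sub>1[t\<^sub>2[\<alpha>]]\<close> and \<open>t\<^sub>2[\<alpha>]\<close> into \<open>\<Delta>\<close> whenever \<open>(t\<^sub>1t\<^sub>2)[\<alpha>]\<close> is there,
  and diagram axiom (8) identifies \<open>\<delta>((t\<^sub>1t\<^sub>2)[\<alpha>])\<close> with \<open>\<delta>(t\<^sub>1[t\<^sub>2[\<alpha>]])\<close>; so \<open>f\<^sub>1 \<circ> f\<^sub>2\<close>
  extends \<open>D\<^bsub>t\<^sub>1t\<^sub>2\<^esub>(\<delta>)\<close>. For the strong part, axiom (9) passes \<open>\<delta>(last(t\<^sub>1t\<^sub>2)) = \<omega>\<close> on to
  both factors, so \<open>last(f\<^sub>1) = last(f\<^sub>2) = \<omega>\<close>. A time warp \<open>f\<close> with \<open>last(f) = \<omega>\<close> has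
  \<open>f(\<omega>) = \<omega>\<close>: otherwise the values \<open>f(n)\<close> would form a finite set whose join \<open>f(\<omega>)\<close> is
  attained at some \<open>n\<close>. Hence \<open>f\<^sub>2\<close> maps finite arguments to finite values and
  \<open>f\<^sub>1(f\<^sub>2(n)) \<noteq> f\<^sub>1(\<omega>) = f\<^sub>1(f\<^sub>2(\<omega>))\<close>.\<close>

lemma Sup_range_enat: "Sup (range enat) = \<infinity>"
  by (simp add: Sup_enat_def finite_image_iff inj_on_def)

lemma last_tw_eq_infinity_iff: "last_tw f = \<infinity> \<longleftrightarrow> (\<forall>n. f (enat n) \<noteq> f \<infinity>)"
proof
  assume last: "last_tw f = \<infinity>"
  show "\<forall>n. f (enat n) \<noteq> f \<infinity>"
  proof (intro allI notI)
    fix n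
    assume "f (enat n) = f \<infinity>"
    then have "last_tw f \<le> enat n"
      unfolding last_tw_def by (rule Least_le)
    with last show False by simp
  qed
next
  assume "\<forall>n. f (enat n) \<noteq> f \<infinity>"
  moreover have "f (last_tw f) = f \<infinity>"
    unfolding last_tw_def by (rule LeastI[of _ \<infinity>]) simp
  ultimately show "last_tw f = \<infinity>"
    by (cases "last_tw f") auto
qed

lemma time_warp_infinity_if_last_tw_infinity:
  assumes tw: "time_warp f" and last: "last_tw f = \<infinity>"
  shows "f \<infinity> = \<infinity>"
proof (rule ccontr)
  let ?F = "f ` range enat"
  have sup: "f \<infinity> = Sup ?F"
    using tw Sup_range_enat unfolding time_warp_def by metis
  assume "f \<infinity> \<noteq> \<infinity>"
  then obtain c where c: "f \<infinity> = enat c" by auto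
  then have "finite ?F"
    using sup by (intro finite_enat_bounded[of _ c]) (metis Sup_upper)
  then have "Sup ?F \<in> ?F"
    using Max_in Max_Sup by (metis empty_not_UNIV image_is_empty)
  then show False
    using sup last last_tw_eq_infinity_iff by fastforce
qed

lemma last_tw_comp_infinity:
  assumes "time_warp g" and "last_tw f = \<infinity>" and "last_tw g = \<infinity>"
  shows "last_tw (f \<circ> g) = \<infinity>"
  unfolding last_tw_eq_infinity_iff
proof
  fix n
  have g_inf: "g \<infinity> = \<infinity>"
    using assms(1,3) by (rule time_warp_infinity_if_last_tw_infinity)
  then obtain k where "g (enat n) = enat k"
    using assms(3) last_tw_eq_infinity_iff by (metis enat.exhaust)
  then show "(f \<circ> g) (enat n) \<noteq> (f \<circ> g) \<infinity>"
    using g_inf assms(2) last_tw_eq_infinity_iff by simp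
qed

lemma time_warp_comp:
  assumes "time_warp f" and "time_warp g"
  shows "time_warp (f \<circ> g)"
  using assms by (simp add: time_warp_def image_comp)

lemma saturated_App_Comp:
  assumes "saturated \<Delta>" and "App (Comp t u) a \<in> \<Delta>"
  shows "App t (App u a) \<in> \<Delta>" and "App u a \<in> \<Delta>"
  using assms leadsto.intros unfolding saturated_def by blast+

lemma saturated_LastS:
  assumes "saturated \<Delta>" and "App t a \<in> \<Delta>"
  shows "LastS t \<in> \<Delta>"
  using assms leadsto.intros unfolding saturated_def by blast

lemma diagram_App_Comp:
  assumes "diagram \<Delta> \<delta>" and "App (Comp t u) a \<in> \<Delta>" and "App t (App u a) \<in> \<Delta>"
  shows "\<delta> (App (Comp t u) a) = \<delta> (App t (App u a))"
  using assms unfolding diagram_def by (elim conjE) simp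

lemma diagram_LastS_Comp:
  assumes "diagram \<Delta> \<delta>" and "LastS (Comp t u) \<in> \<Delta>" and "LastS t \<in> \<Delta>" and "LastS u \<in> \<Delta>"
    and "\<delta> (LastS (Comp t u)) = \<infinity>"
  shows "\<delta> (LastS t) = \<infinity>" and "\<delta> (LastS u) = \<infinity>"
  using assms unfolding diagram_def by (elim conjE; simp)+

lemma strongly_extends_iff:
  "strongly_extends \<Delta> \<delta> t f \<longleftrightarrow> time_warp f
    \<and> (\<forall>a. App t a \<in> \<Delta> \<longrightarrow> f (\<delta> a) = \<delta> (App t a))
    \<and> ((\<exists>a. App t a \<in> \<Delta>) \<and> \<delta> (LastS t) = \<infinity> \<longrightarrow> last_tw f = \<infinity>)"
  unfolding strongly_extends_def extends_D_def D_of_def by auto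

theorem lemma3p5:
  assumes "finite \<Delta>" and "saturated \<Delta>" and "diagram \<Delta> \<delta>"
    and "time_warp f1" and "time_warp f2"
    and "strongly_extends \<Delta> \<delta> t1 f1" and "strongly_extends \<Delta> \<delta> t2 f2"
  shows "strongly_extends \<Delta> \<delta> (Comp t1 t2) (f1 \<circ> f2)"
  unfolding strongly_extends_iff
proof (intro conjI allI impI)
  show "time_warp (f1 \<circ> f2)"
    using assms(4,5) by (rule time_warp_comp)
next
  fix a
  assume a: "App (Comp t1 t2) a \<in> \<Delta>"
  then show "(f1 \<circ> f2) (\<delta> a) = \<delta> (App (Comp t1 t2) a)"
    using assms(6,7) saturated_App_Comp[OF assms(2) a] diagram_App_Comp[OF assms(3) a]
    by (simp add: strongly_extends_iff)
next
  assume "(\<exists>a. App (Comp t1 t2) a \<in> \<Delta>) \<and> \<delta> (LastS (Comp t1 t2)) = \<infinity>"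
  then obtain a where a: "App (Comp t1 t2) a \<in> \<Delta>" and last: "\<delta> (LastS (Comp t1 t2)) = \<infinity>"
    by blast
  note in_\<Delta> = saturated_App_Comp[OF assms(2) a]
  have "\<delta> (LastS t1) = \<infinity>" and "\<delta> (LastS t2) = \<infinity>"
    using diagram_LastS_Comp[OF assms(3) saturated_LastS[OF assms(2) a]
        saturated_LastS[OF assms(2) in_\<Delta>(1)] saturated_LastS[OF assms(2) in_\<Delta>(2)] last]
    by simp_all
  then have "last_tw f1 = \<infinity>" and "last_tw f2 = \<infinity>"
    using assms(6,7) in_\<Delta> by (auto simp: strongly_extends_iff)
  then show "last_tw (f1 \<circ> f2) = \<infinity>"
    using assms(5) by (intro last_tw_comp_infinity)
qed

end
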